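(* Consider the class $\mathcal{C}$ of third order ordinary differential equations of the form $$y'''=\frac{-3X(x,y)\,(y'')^2+P(x,y)\,y''\,(y')^2+Q(x,y)\,y''\,y'+R(x,y)\,y''+S(x,y)\,(y')^5+L(x,y)\,(y')^4+K(x,y)\,(y')^3+M(x,y)\,(y')^2+N(x,y)\,y'+T(x,y)}{Y(x,y)-X(x,y)\,y'},$$ where $X,Y,P,Q,R,S,L,K,M,N,T$ are arbitrary functions of $(x,y)$ (note that the coefficient of $(y'')^2$ in the numerator is exactly $-3$ times the function $X$ appearing in the denominator). Then $\mathcal{C}$ is invariant under point transformations: for every non-degenerate point change of variables $\tilde x=\tilde x(x,y)$, $\tilde y=\tilde y(x,y)$, every equation of $\mathcal{C}$ is transformed into an equation $\tilde y'''=g(\tilde x,\tilde y,\tilde y',\tilde y'')$ which is again of the same form (with $x,y$ replaced by $\tilde x,\tilde y$, and with some new coefficient functions $\tilde X,\tilde Y,\tilde P,\dots,\tilde T$ of $(\tilde x,\tilde y)$).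
   Context: A point transformation is a change of variables $\tilde x=\tilde x(x,y)$, $\tilde y=\tilde y(x,y)$ on the plane, assumed non-degenerate, i.e. with nonzero Jacobian determinant; derivatives $y',y'',y'''$ transform accordingly by the chain rule when $y$ is regarded as a function of $x$ and $\tilde y$ as a function of $\tilde x$. A class of equations $y'''=f(x,y,y',y'')$ with $f$ in a prescribed set of functions $\mathcal F$ is called point-invariant if, for every $f\in\mathcal F$ and every non-degenerate point transformation, the transformed equation $\tilde y'''=g(\tilde x,\tilde y,\tilde y',\tilde y'')$ has $g\in\mathcal F$. *)

theory Defs
  imports "HOL-Analysis.Analysis"
begin

definition pdx :: "(real \<times> real \<Rightarrow> real) \<Rightarrow> real \<times> real \<Rightarrow> real" where
  "pdx f z = deriv (\<lambda>x. f (x, snd z)) (fst z)"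

definition pdy :: "(real \<times> real \<Rightarrow> real) \<Rightarrow> real \<times> real \<Rightarrow> real" where
  "pdy f z = deriv (\<lambda>y. f (fst z, y)) (snd z)"

fun C_k :: "nat \<Rightarrow> (real \<times> real \<Rightarrow> real) \<Rightarrow> bool" where
  "C_k 0 f = continuous_on UNIV f"
| "C_k (Suc k) f = ((\<forall>z. f differentiable (at z)) \<and> C_k k (pdx f) \<and> C_k k (pdy f))"

text \<open>Right-hand side of the equations of the class C, evaluated at (x,y,y',y'') = (x,y,p,q).\<close>
definition class_rhs ::
  "(real \<Rightarrow> real \<Rightarrow> real) \<Rightarrow> (real \<Rightarrow> real \<Rightarrow> real) \<Rightarrow> (real \<Rightarrow> real \<Rightarrow> real) \<Rightarrow>
   (real \<Rightarrow> real \<Rightarrow> real) \<Rightarrow> (real \<Rightarrow> real \<Rightarrow> real) \<Rightarrow> (real \<Rightarrow> real \<Rightarrow> real) \<Rightarrow>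
   (real \<Rightarrow> real \<Rightarrow> real) \<Rightarrow> (real \<Rightarrow> real \<Rightarrow> real) \<Rightarrow> (real \<Rightarrow> real \<Rightarrow> real) \<Rightarrow>
   (real \<Rightarrow> real \<Rightarrow> real) \<Rightarrow> (real \<Rightarrow> real \<Rightarrow> real) \<Rightarrow>
   real \<Rightarrow> real \<Rightarrow> real \<Rightarrow> real \<Rightarrow> real" where
  "class_rhs X Y P Q R S L K M N T x y p q =
     (- 3 * X x y * q^2 + P x y * q * p^2 + Q x y * q * p + R x y * q
      + S x y * p^5 + L x y * p^4 + K x y * p^3 + M x y * p^2 + N x y * p + T x y)
     / (Y x y - X x y * p)"

text \<open>Transformed curve: along the graph of y, the new coordinates are
  x~(s) = xi(s, y s), y~(s) = eta(s, y s); the derivatives of y~ as a function of x~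
  are obtained by the chain rule: d/dx~ = (1 / x~'(s)) d/ds.\<close>
definition tx :: "(real \<times> real \<Rightarrow> real) \<Rightarrow> (real \<Rightarrow> real) \<Rightarrow> real \<Rightarrow> real" where
  "tx \<xi> y = (\<lambda>s. \<xi> (s, y s))"

definition ty :: "(real \<times> real \<Rightarrow> real) \<Rightarrow> (real \<Rightarrow> real) \<Rightarrow> real \<Rightarrow> real" where
  "ty \<eta> y = (\<lambda>s. \<eta> (s, y s))"

definition tp :: "(real \<times> real \<Rightarrow> real) \<Rightarrow> (real \<times> real \<Rightarrow> real) \<Rightarrow> (real \<Rightarrow> real) \<Rightarrow> real \<Rightarrow> real" where
  "tp \<xi> \<eta> y = (\<lambda>s. deriv (ty \<eta> y) s / deriv (tx \<xi> y) s)"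

definition tq :: "(real \<times> real \<Rightarrow> real) \<Rightarrow> (real \<times> real \<Rightarrow> real) \<Rightarrow> (real \<Rightarrow> real) \<Rightarrow> real \<Rightarrow> real" where
  "tq \<xi> \<eta> y = (\<lambda>s. deriv (tp \<xi> \<eta> y) s / deriv (tx \<xi> y) s)"

definition tr :: "(real \<times> real \<Rightarrow> real) \<Rightarrow> (real \<times> real \<Rightarrow> real) \<Rightarrow> (real \<Rightarrow> real) \<Rightarrow> real \<Rightarrow> real" where
  "tr \<xi> \<eta> y = (\<lambda>s. deriv (tq \<xi> \<eta> y) s / deriv (tx \<xi> y) s)"

end

theory Submission
  imports Defs "HOL-Computational_Algebra.Polynomial"
begin

(* Along the graph of y write \<Lambda>, \<Theta> for the derivatives of s \<mapsto> \<xi> (s, y s) and s \<mapsto> \<eta> (s, y s).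
   They are polynomials in y' whose coefficients are partial derivatives of \<xi>, \<eta>; likewise
   \<Lambda>', \<Theta>' are affine in y'' and \<Lambda>'', \<Theta>'' are affine in y'' and y'''. The transformed derivatives
   are the prolongation formulas
     p~ = \<Theta> / \<Lambda>,  q~ = W / \<Lambda>^3,  r~ = ((\<Theta>'' \<Lambda> - \<Theta> \<Lambda>'') \<Lambda> - 3 \<Lambda>' W) / \<Lambda>^5,
   where W = \<Theta>' \<Lambda> - \<Theta> \<Lambda>' = C(y') + J y'' and J is the Jacobian. Substituting the equation for y'''
   and eliminating y'' in favour of W gives
     J (Y - X y') ((\<Theta>'' \<Lambda> - \<Theta> \<Lambda>'') \<Lambda> - 3 \<Lambda>' W) = -3 X~ W^2 + \<Lambda> W A(y') + \<Lambda> B(y')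
   with X~ = \<xi>_x X + \<xi>_y Y: the terms in y''^2 collapse into a single multiple of W^2 exactly
   because the coefficient of y''^2 in the equation is -3 X. The polynomials A and B have degree 2
   and 5, their candidate leading coefficients cancelling thanks to the factors 3 in the third
   total derivative. Finally Y~ - X~ p~ = J (Y - X y') / \<Lambda> with Y~ = \<eta>_x X + \<eta>_y Y, and a
   polynomial of degree n in y' divided by \<Lambda>^n is a polynomial of degree n in p~ = \<Theta> / \<Lambda>,
   because (\<Lambda>, \<Theta>) arises from (1, y') by an invertible linear map. *)

type_synonym plane_fun = "real \<times> real \<Rightarrow> real"

lemma coeff_mult_degree_bound:
  assumes "degree p \<le> m" and "degree q \<le> n"
  shows "coeff (p * q) (m + n) = coeff p m * coeff q n"
proof -
  have "coeff p i * coeff q (m + n - i) = 0" if "i \<le> m + n" "i \<noteq> m" for i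
    using that assms by (cases "i < m") (auto simp: coeff_eq_0)
  then show ?thesis
    unfolding coeff_mult by (subst sum.remove[of _ m]) (auto intro!: sum.neutral)
qed

lemma degree_mult_le_add:
  assumes "degree p \<le> m" and "degree q \<le> n"
  shows "degree (p * q) \<le> m + n"
  using assms by (intro order.trans[OF degree_mult_le] add_mono)

lemma degree_le_if_top_coeff_eq_0:
  assumes "degree p \<le> Suc n" and "coeff p (Suc n) = 0"
  shows "degree p \<le> n"
  using assms by (intro degree_le) (metis Suc_lessI coeff_eq_0 le_less_trans)

lemma degree_cancel_top:
  fixes v w :: "'a::comm_ring_1 poly"
  assumes "degree v \<le> n" and "degree w \<le> Suc n" and "coeff v n = k * coeff w (Suc n)"
  shows "degree ([:Y, -X:] * v + smult (k * X) w) \<le> n"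
proof (rule degree_le_if_top_coeff_eq_0)
  have D: "degree [:Y, -X:] \<le> 1" by simp
  show "degree ([:Y, -X:] * v + smult (k * X) w) \<le> Suc n"
    using degree_mult_le_add[OF D assms(1)] assms(2)
    by (auto intro!: degree_add_le order.trans[OF degree_smult_le])
  show "coeff ([:Y, -X:] * v + smult (k * X) w) (Suc n) = 0"
    using coeff_mult_degree_bound[OF D assms(1)] assms(3) by (simp add: algebra_simps)
qed

lemma poly_eq_sum_coeffs:
  fixes f :: "'a::comm_semiring_1 poly"
  assumes "degree f \<le> n"
  shows "poly f x = (\<Sum>k\<le>n. coeff f k * x ^ k)"
proof -
  have "poly f x = poly (\<Sum>k\<le>n. monom (coeff f k) k) x"
    by (simp only: poly_as_sum_of_monoms'[OF assms])
  also have "\<dots> = (\<Sum>k\<le>n. coeff f k * x ^ k)"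
    by (simp add: poly_sum poly_monom)
  finally show ?thesis .
qed

definition mobius_poly :: "nat \<Rightarrow> 'a::field \<Rightarrow> 'a \<Rightarrow> 'a \<Rightarrow> 'a \<Rightarrow> 'a poly \<Rightarrow> 'a poly" where
  "mobius_poly n a b c d f = (\<Sum>k\<le>n. smult (coeff f k) ([:-c, a:] ^ k * [:d, -b:] ^ (n - k)))"

lemma degree_mobius_poly_le: "degree (mobius_poly n a b c d f) \<le> n"
  unfolding mobius_poly_def
proof (intro degree_sum_le)
  fix k assume "k \<in> {..n}"
  have "degree ([:-c, a:] ^ k * [:d, -b:] ^ (n - k)) \<le> k + (n - k)"
    by (intro order.trans[OF degree_mult_le] add_mono order.trans[OF degree_power_le]) auto
  then show "degree (smult (coeff f k) ([:-c, a:] ^ k * [:d, -b:] ^ (n - k))) \<le> n"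
    using \<open>k \<in> {..n}\<close> by (auto intro: order.trans[OF degree_smult_le])
qed simp

lemma poly_mobius_poly:
  fixes a b c d x :: "'a::field"
  assumes "degree f \<le> n" and "a + b * x \<noteq> 0"
  shows "poly (mobius_poly n a b c d f) ((c + d * x) / (a + b * x))
    = (a * d - b * c) ^ n * poly f x / (a + b * x) ^ n"
proof -
  define u where "u = (c + d * x) / (a + b * x)"
  have num: "a * u - c = (a * d - b * c) * x / (a + b * x)"
   and den: "d - b * u = (a * d - b * c) / (a + b * x)"
    using assms(2) unfolding u_def by (simp_all add: field_simps)
  have "poly (mobius_poly n a b c d f) u = (\<Sum>k\<le>n. coeff f k * (a * u - c) ^ k * (d - b * u) ^ (n - k))"
    unfolding mobius_poly_def by (simp add: poly_sum algebra_simps)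
  also have "\<dots> = (\<Sum>k\<le>n. (a * d - b * c) ^ n * (coeff f k * x ^ k) / (a + b * x) ^ n)"
  proof (intro sum.cong refl)
    fix k assume "k \<in> {..n}"
    then have "(a * d - b * c) ^ k * (a * d - b * c) ^ (n - k) = (a * d - b * c) ^ n"
      by (simp flip: power_add)
    then show "coeff f k * (a * u - c) ^ k * (d - b * u) ^ (n - k)
        = (a * d - b * c) ^ n * (coeff f k * x ^ k) / (a + b * x) ^ n"
      unfolding num den using \<open>k \<in> {..n}\<close>
      by (simp add: power_divide power_mult_distrib flip: power_add)
  qed
  also have "\<dots> = (a * d - b * c) ^ n * poly f x / (a + b * x) ^ n"
    using assms(1) by (simp add: poly_eq_sum_coeffs sum_divide_distrib sum_distrib_left)
  finally show ?thesis unfolding u_def .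
qed

lemma has_real_derivative_along_curve:
  fixes f :: "'a::real_normed_vector \<Rightarrow> real"
  assumes "(f has_derivative f') (at (g s))" and "(g has_vector_derivative v) (at s)"
  shows "((\<lambda>s. f (g s)) has_real_derivative f' v) (at s)"
  using vector_derivative_diff_chain_within[OF assms(2) has_derivative_at_withinI[OF assms(1)]]
  by (simp add: has_real_derivative_iff_has_vector_derivative o_def)

lemma partial_derivs_eq:
  assumes "(f has_derivative f') (at z)"
  shows "pdx f z = f' (1, 0)" and "pdy f z = f' (0, 1)"
proof -
  have "((\<lambda>x. (x, snd z)) has_vector_derivative (1, 0)) (at (fst z))"
   and "((\<lambda>x. (fst z, x)) has_vector_derivative (0, 1)) (at (snd z))"
    by (auto intro!: derivative_eq_intros simp: has_vector_derivative_def)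
  then show "pdx f z = f' (1, 0)" and "pdy f z = f' (0, 1)"
    using has_real_derivative_along_curve[of f f'] assms unfolding pdx_def pdy_def
    by (auto intro!: DERIV_imp_deriv)
qed

lemma C_k_SucD:
  assumes "C_k (Suc k) f"
  shows "f differentiable (at z)" and "C_k k (pdx f)" and "C_k k (pdy f)"
  using assms unfolding C_k.simps by blast+

definition jet_poly1 :: "plane_fun \<Rightarrow> real \<times> real \<Rightarrow> real poly" where
  "jet_poly1 f z = [:pdx f z, pdy f z:]"

definition jet_poly2 :: "plane_fun \<Rightarrow> real \<times> real \<Rightarrow> real poly" where
  "jet_poly2 f z = [:pdx (pdx f) z, pdy (pdx f) z + pdx (pdy f) z, pdy (pdy f) z:]"

definition jet_poly3 :: "plane_fun \<Rightarrow> real \<times> real \<Rightarrow> real poly" where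
  "jet_poly3 f z =
     [:pdx (pdx (pdx f)) z,
       pdy (pdx (pdx f)) z + pdx (pdy (pdx f)) z + pdx (pdx (pdy f)) z,
       pdy (pdy (pdx f)) z + pdy (pdx (pdy f)) z + pdx (pdy (pdy f)) z,
       pdy (pdy (pdy f)) z:]"

definition jet_poly3_q :: "plane_fun \<Rightarrow> real \<times> real \<Rightarrow> real poly" where
  "jet_poly3_q f z = [:pdy (pdx f) z + 2 * pdx (pdy f) z, 3 * pdy (pdy f) z:]"

lemma degree_jet_poly_le:
  "degree (jet_poly1 f z) \<le> 1" "degree (jet_poly2 f z) \<le> 2"
  "degree (jet_poly3 f z) \<le> 3" "degree (jet_poly3_q f z) \<le> 1"
  unfolding jet_poly1_def jet_poly2_def jet_poly3_def jet_poly3_q_def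
  by (auto simp: eval_nat_numeral intro!: order.trans[OF degree_pCons_le])

definition total_deriv1 :: "plane_fun \<Rightarrow> real \<times> real \<Rightarrow> real \<Rightarrow> real" where
  "total_deriv1 f z p = poly (jet_poly1 f z) p"

definition total_deriv2 :: "plane_fun \<Rightarrow> real \<times> real \<Rightarrow> real \<Rightarrow> real \<Rightarrow> real" where
  "total_deriv2 f z p q = poly (jet_poly2 f z) p + pdy f z * q"

definition total_deriv3 ::
  "plane_fun \<Rightarrow> real \<times> real \<Rightarrow> real \<Rightarrow> real \<Rightarrow> real \<Rightarrow> real" where
  "total_deriv3 f z p q r = poly (jet_poly3 f z) p + poly (jet_poly3_q f z) p * q + pdy f z * r"

lemma has_real_derivative_total_deriv1:
  assumes "f differentiable (at (s, y s))" and "(y has_real_derivative p) (at s)"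
  shows "((\<lambda>s. f (s, y s)) has_real_derivative total_deriv1 f (s, y s) p) (at s)"
proof -
  obtain f' where f': "(f has_derivative f') (at (s, y s))"
    using assms(1) unfolding differentiable_def by blast
  have "((\<lambda>s. (s, y s)) has_vector_derivative (1, p)) (at s)"
    using assms(2) by (auto intro!: derivative_eq_intros
        simp: has_vector_derivative_def has_field_derivative_def)
  from has_real_derivative_along_curve[of f f' "\<lambda>s. (s, y s)", OF f' this]
  have "((\<lambda>s. f (s, y s)) has_real_derivative f' (1, p)) (at s)" .
  moreover have "f' (1, p) = total_deriv1 f (s, y s) p"
    using linear_add[OF has_derivative_linear[OF f'], of "(1, 0)" "(0, p)"]
      linear_scale[OF has_derivative_linear[OF f'], of p "(0, 1)"]
    by (simp add: total_deriv1_def jet_poly1_def partial_derivs_eq[OF f'] algebra_simps)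
  ultimately show ?thesis by (simp only:)
qed

lemma has_real_derivative_total_deriv2:
  assumes "C_k (Suc (Suc k)) f" and "y differentiable (at s)" and "deriv y differentiable (at s)"
  shows "((\<lambda>s. total_deriv1 f (s, y s) (deriv y s)) has_real_derivative
      total_deriv2 f (s, y s) (deriv y s) (deriv (deriv y) s)) (at s)"
proof -
  have dy: "(y has_real_derivative deriv y s) (at s)"
   and ddy: "(deriv y has_real_derivative deriv (deriv y) s) (at s)"
    using assms(2,3) by (simp_all add: DERIV_deriv_iff_real_differentiable)
  have "pdx f differentiable (at (s, y s))" and "pdy f differentiable (at (s, y s))"
    using C_k_SucD(2,3)[OF assms(1)] by (auto dest: C_k_SucD(1))
  then have "((\<lambda>s. pdx f (s, y s) + pdy f (s, y s) * deriv y s) has_real_derivative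
      total_deriv1 (pdx f) (s, y s) (deriv y s)
      + (total_deriv1 (pdy f) (s, y s) (deriv y s) * deriv y s + deriv (deriv y) s * pdy f (s, y s))) (at s)"
    by (intro DERIV_add DERIV_mult ddy has_real_derivative_total_deriv1[OF _ dy])
  moreover have "(\<lambda>s. total_deriv1 f (s, y s) (deriv y s))
      = (\<lambda>s. pdx f (s, y s) + pdy f (s, y s) * deriv y s)"
    by (simp add: total_deriv1_def jet_poly1_def algebra_simps)
  moreover have "total_deriv2 f (s, y s) (deriv y s) (deriv (deriv y) s)
      = total_deriv1 (pdx f) (s, y s) (deriv y s)
        + (total_deriv1 (pdy f) (s, y s) (deriv y s) * deriv y s + deriv (deriv y) s * pdy f (s, y s))"
    by (simp add: total_deriv1_def total_deriv2_def jet_poly1_def jet_poly2_def algebra_simps)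
  ultimately show ?thesis by (simp only:)
qed

lemma has_real_derivative_total_deriv3:
  assumes "C_k (Suc (Suc (Suc k))) f" and "y differentiable (at s)" and "deriv y differentiable (at s)"
    and "deriv (deriv y) differentiable (at s)"
  shows "((\<lambda>s. total_deriv2 f (s, y s) (deriv y s) (deriv (deriv y) s)) has_real_derivative
      total_deriv3 f (s, y s) (deriv y s) (deriv (deriv y) s) (deriv (deriv (deriv y)) s)) (at s)"
proof -
  have dy: "(y has_real_derivative deriv y s) (at s)"
   and ddy: "(deriv y has_real_derivative deriv (deriv y) s) (at s)"
   and dddy: "(deriv (deriv y) has_real_derivative deriv (deriv (deriv y)) s) (at s)"
    using assms(2-4) by (simp_all add: DERIV_deriv_iff_real_differentiable)
  note C2 = C_k_SucD(2,3)[OF assms(1)]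
  have "pdy f differentiable (at (s, y s))"
    using C2(2) by (rule C_k_SucD(1))
  then have "((\<lambda>s. total_deriv1 (pdx f) (s, y s) (deriv y s)
      + total_deriv1 (pdy f) (s, y s) (deriv y s) * deriv y s + pdy f (s, y s) * deriv (deriv y) s)
    has_real_derivative
      total_deriv2 (pdx f) (s, y s) (deriv y s) (deriv (deriv y) s)
      + (total_deriv2 (pdy f) (s, y s) (deriv y s) (deriv (deriv y) s) * deriv y s
         + deriv (deriv y) s * total_deriv1 (pdy f) (s, y s) (deriv y s))
      + (total_deriv1 (pdy f) (s, y s) (deriv y s) * deriv (deriv y) s
         + deriv (deriv (deriv y)) s * pdy f (s, y s))) (at s)"
    by (intro DERIV_add DERIV_mult ddy dddy has_real_derivative_total_deriv1[OF _ dy]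
        has_real_derivative_total_deriv2[OF C2(1) assms(2,3)]
        has_real_derivative_total_deriv2[OF C2(2) assms(2,3)])
  moreover have "(\<lambda>s. total_deriv2 f (s, y s) (deriv y s) (deriv (deriv y) s))
      = (\<lambda>s. total_deriv1 (pdx f) (s, y s) (deriv y s)
        + total_deriv1 (pdy f) (s, y s) (deriv y s) * deriv y s + pdy f (s, y s) * deriv (deriv y) s)"
    by (simp add: total_deriv1_def total_deriv2_def jet_poly1_def jet_poly2_def algebra_simps)
  moreover have "total_deriv3 f (s, y s) (deriv y s) (deriv (deriv y) s) (deriv (deriv (deriv y)) s)
      = total_deriv2 (pdx f) (s, y s) (deriv y s) (deriv (deriv y) s)
      + (total_deriv2 (pdy f) (s, y s) (deriv y s) (deriv (deriv y) s) * deriv y s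
         + deriv (deriv y) s * total_deriv1 (pdy f) (s, y s) (deriv y s))
      + (total_deriv1 (pdy f) (s, y s) (deriv y s) * deriv (deriv y) s
         + deriv (deriv (deriv y)) s * pdy f (s, y s))"
    by (simp add: total_deriv1_def total_deriv2_def total_deriv3_def jet_poly1_def jet_poly2_def
        jet_poly3_def jet_poly3_q_def algebra_simps)
  ultimately show ?thesis by (simp only:)
qed

definition deriv_wrt :: "(real \<Rightarrow> real) \<Rightarrow> (real \<Rightarrow> real) \<Rightarrow> real \<Rightarrow> real" where
  "deriv_wrt u v s = deriv v s / deriv u s"

lemma deriv_wrt_eq:
  assumes "(u has_real_derivative u1) (at s)" and "(v has_real_derivative v1) (at s)"
  shows "deriv_wrt u v s = v1 / u1"
  using assms by (simp add: deriv_wrt_def DERIV_imp_deriv)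

lemma has_real_derivative_deriv_wrt:
  assumes V: "open V" "s \<in> V" and u1: "\<And>x. x \<in> V \<Longrightarrow> u1 x \<noteq> 0"
    and du: "\<And>x. x \<in> V \<Longrightarrow> (u has_real_derivative u1 x) (at x)"
    and dv: "\<And>x. x \<in> V \<Longrightarrow> (v has_real_derivative v1 x) (at x)"
    and du1: "(u1 has_real_derivative u2) (at s)" and dv1: "(v1 has_real_derivative v2) (at s)"
  shows "(deriv_wrt u v has_real_derivative (v2 * u1 s - v1 s * u2) / u1 s ^ 2) (at s)"
proof -
  have "((\<lambda>x. v1 x / u1 x) has_real_derivative (v2 * u1 s - v1 s * u2) / u1 s ^ 2) (at s)"
    using DERIV_quotient[OF dv1 du1 u1[OF V(2)]] by (simp add: power2_eq_square algebra_simps)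
  then show ?thesis
    using V by (rule has_field_derivative_transform_within_open) (simp add: deriv_wrt_eq[OF du dv])
qed

lemma deriv_wrt_iterated:
  assumes U: "open U" "t \<in> U" and u1t: "u1 t \<noteq> 0"
    and du: "\<And>s. s \<in> U \<Longrightarrow> (u has_real_derivative u1 s) (at s)"
    and dv: "\<And>s. s \<in> U \<Longrightarrow> (v has_real_derivative v1 s) (at s)"
    and du1: "\<And>s. s \<in> U \<Longrightarrow> (u1 has_real_derivative u2 s) (at s)"
    and dv1: "\<And>s. s \<in> U \<Longrightarrow> (v1 has_real_derivative v2 s) (at s)"
    and du2: "(u2 has_real_derivative u3) (at t)" and dv2: "(v2 has_real_derivative v3) (at t)"
  shows "deriv_wrt u v t = v1 t / u1 t"
    and "deriv_wrt u (deriv_wrt u v) t = (v2 t * u1 t - v1 t * u2 t) / u1 t ^ 3"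
    and "deriv_wrt u (deriv_wrt u (deriv_wrt u v)) t
      = ((v3 * u1 t - v1 t * u3) * u1 t - 3 * u2 t * (v2 t * u1 t - v1 t * u2 t)) / u1 t ^ 5"
proof -
  show "deriv_wrt u v t = v1 t / u1 t"
    using U by (simp add: deriv_wrt_eq du dv)
  obtain e where "e > 0" and e: "\<And>s. dist t s < e \<Longrightarrow> u1 s \<noteq> 0"
    using continuous_at_avoid[OF DERIV_isCont[OF du1[OF U(2)]] u1t] by blast
  define V where "V = U \<inter> ball t e"
  have V: "open V" "t \<in> V" "V \<subseteq> U" and u1V: "\<And>s. s \<in> V \<Longrightarrow> u1 s \<noteq> 0"
    using U \<open>e > 0\<close> e unfolding V_def by auto
  define w1 where "w1 s = (v2 s * u1 s - v1 s * u2 s) / u1 s ^ 2" for s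
  have dw: "(deriv_wrt u v has_real_derivative w1 s) (at s)" if "s \<in> V" for s
    unfolding w1_def using V that u1V
    by (intro has_real_derivative_deriv_wrt[of V] du dv du1 dv1) auto
  have dw1: "(w1 has_real_derivative
      ((v3 * u1 t - v1 t * u3) * u1 t - 2 * u2 t * (v2 t * u1 t - v1 t * u2 t)) / u1 t ^ 3) (at t)"
  proof -
    have "u1 t ^ 2 \<noteq> 0" using u1t by simp
    from DERIV_quotient[OF DERIV_diff[OF DERIV_mult[OF dv2 du1[OF U(2)]] DERIV_mult[OF dv1[OF U(2)] du2]]
        DERIV_power[OF du1[OF U(2)]] this]
    show ?thesis
      unfolding w1_def by (rule DERIV_cong) (use u1t in \<open>simp add: field_simps eval_nat_numeral\<close>)
  qed
  show "deriv_wrt u (deriv_wrt u v) t = (v2 t * u1 t - v1 t * u2 t) / u1 t ^ 3"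
    using deriv_wrt_eq[OF du[OF U(2)] dw[OF V(2)]] u1t by (simp add: w1_def eval_nat_numeral)
  have "(deriv_wrt u (deriv_wrt u v) has_real_derivative
      (((v3 * u1 t - v1 t * u3) * u1 t - 2 * u2 t * (v2 t * u1 t - v1 t * u2 t)) / u1 t ^ 3
        * u1 t - w1 t * u2 t) / u1 t ^ 2) (at t)"
    using V u1V dw dw1 by (intro has_real_derivative_deriv_wrt[of V] du du1) auto
  from deriv_wrt_eq[OF du[OF U(2)] this]
  have "deriv_wrt u (deriv_wrt u (deriv_wrt u v)) t
      = ((((v3 * u1 t - v1 t * u3) * u1 t - 2 * u2 t * (v2 t * u1 t - v1 t * u2 t)) / u1 t ^ 3
        * u1 t - w1 t * u2 t) / u1 t ^ 2) / u1 t" .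
  also have "\<dots> = ((v3 * u1 t - v1 t * u3) * u1 t - 3 * u2 t * (v2 t * u1 t - v1 t * u2 t)) / u1 t ^ 5"
    using u1t by (simp add: w1_def field_simps eval_nat_numeral)
  finally show "deriv_wrt u (deriv_wrt u (deriv_wrt u v)) t
      = ((v3 * u1 t - v1 t * u3) * u1 t - 3 * u2 t * (v2 t * u1 t - v1 t * u2 t)) / u1 t ^ 5" .
qed

definition prolong1 :: "plane_fun \<Rightarrow> plane_fun \<Rightarrow> real \<times> real \<Rightarrow> real \<Rightarrow> real" where
  "prolong1 \<xi> \<eta> z p = total_deriv1 \<eta> z p / total_deriv1 \<xi> z p"

definition prolong2 ::
  "plane_fun \<Rightarrow> plane_fun \<Rightarrow> real \<times> real \<Rightarrow> real \<Rightarrow> real \<Rightarrow> real" where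
  "prolong2 \<xi> \<eta> z p q =
     (total_deriv2 \<eta> z p q * total_deriv1 \<xi> z p - total_deriv1 \<eta> z p * total_deriv2 \<xi> z p q)
     / total_deriv1 \<xi> z p ^ 3"

definition prolong3 ::
  "plane_fun \<Rightarrow> plane_fun \<Rightarrow> real \<times> real \<Rightarrow> real \<Rightarrow> real \<Rightarrow> real \<Rightarrow> real" where
  "prolong3 \<xi> \<eta> z p q r =
     (let \<Lambda> = total_deriv1 \<xi> z p; \<Theta> = total_deriv1 \<eta> z p;
          \<Lambda>1 = total_deriv2 \<xi> z p q; \<Theta>1 = total_deriv2 \<eta> z p q
      in ((total_deriv3 \<eta> z p q r * \<Lambda> - \<Theta> * total_deriv3 \<xi> z p q r) * \<Lambda> - 3 * \<Lambda>1 * (\<Theta>1 * \<Lambda> - \<Theta> * \<Lambda>1))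
         / \<Lambda> ^ 5)"

lemma transformed_derivatives_eq_prolong:
  assumes "C_k 3 \<xi>" and "C_k 3 \<eta>" and "open U" and "t \<in> U"
    and y: "\<forall>s\<in>U. y differentiable (at s) \<and> deriv y differentiable (at s)
                 \<and> deriv (deriv y) differentiable (at s)"
    and "deriv (tx \<xi> y) t \<noteq> 0"
  shows "total_deriv1 \<xi> (t, y t) (deriv y t) \<noteq> 0"
    and "tp \<xi> \<eta> y t = prolong1 \<xi> \<eta> (t, y t) (deriv y t)"
    and "tq \<xi> \<eta> y t = prolong2 \<xi> \<eta> (t, y t) (deriv y t) (deriv (deriv y) t)"
    and "tr \<xi> \<eta> y t
      = prolong3 \<xi> \<eta> (t, y t) (deriv y t) (deriv (deriv y) t) (deriv (deriv (deriv y)) t)"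
proof -
  define u1 where "u1 f s = total_deriv1 f (s, y s) (deriv y s)" for f s
  define u2 where "u2 f s = total_deriv2 f (s, y s) (deriv y s) (deriv (deriv y) s)" for f s
  have du: "((\<lambda>s. f (s, y s)) has_real_derivative u1 f s) (at s)"
    if "C_k (Suc (Suc (Suc 0))) f" and "s \<in> U" for f s
    unfolding u1_def using C_k_SucD(1)[OF that(1)] y that(2)
    by (intro has_real_derivative_total_deriv1) (simp_all add: DERIV_deriv_iff_real_differentiable)
  have du1: "(u1 f has_real_derivative u2 f s) (at s)"
    if "C_k (Suc (Suc (Suc 0))) f" and "s \<in> U" for f s
    unfolding u1_def u2_def using y that(2) by (intro has_real_derivative_total_deriv2[OF that(1)]) simp_all
  have du2: "(u2 f has_real_derivative
      total_deriv3 f (t, y t) (deriv y t) (deriv (deriv y) t) (deriv (deriv (deriv y)) t)) (at t)"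
    if "C_k (Suc (Suc (Suc 0))) f" for f
    unfolding u2_def using y assms(4) by (intro has_real_derivative_total_deriv3[OF that]) simp_all
  have C3: "C_k (Suc (Suc (Suc 0))) \<xi>" "C_k (Suc (Suc (Suc 0))) \<eta>"
    using assms(1,2) by (simp_all only: numeral_3_eq_3)
  have u1t: "u1 \<xi> t \<noteq> 0"
    using assms(6) DERIV_imp_deriv[OF du[OF C3(1) assms(4)]] by (simp add: tx_def)
  then show "total_deriv1 \<xi> (t, y t) (deriv y t) \<noteq> 0"
    unfolding u1_def .
  note iterated = deriv_wrt_iterated[OF assms(3,4) u1t du[OF C3(1)] du[OF C3(2)]
      du1[OF C3(1)] du1[OF C3(2)] du2[OF C3(1)] du2[OF C3(2)]]
  have "tp \<xi> \<eta> y = deriv_wrt (tx \<xi> y) (ty \<eta> y)" "tq \<xi> \<eta> y = deriv_wrt (tx \<xi> y) (tp \<xi> \<eta> y)"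
    "tr \<xi> \<eta> y = deriv_wrt (tx \<xi> y) (tq \<xi> \<eta> y)"
    by (simp_all add: fun_eq_iff tp_def tq_def tr_def deriv_wrt_def)
  then show "tp \<xi> \<eta> y t = prolong1 \<xi> \<eta> (t, y t) (deriv y t)"
    and "tq \<xi> \<eta> y t = prolong2 \<xi> \<eta> (t, y t) (deriv y t) (deriv (deriv y) t)"
    and "tr \<xi> \<eta> y t
      = prolong3 \<xi> \<eta> (t, y t) (deriv y t) (deriv (deriv y) t) (deriv (deriv (deriv y)) t)"
    using iterated by (simp_all add: tx_def ty_def u1_def u2_def prolong1_def prolong2_def prolong3_def Let_def)
qed

definition jacobian :: "plane_fun \<Rightarrow> plane_fun \<Rightarrow> real \<times> real \<Rightarrow> real" where
  "jacobian \<xi> \<eta> z = pdx \<xi> z * pdy \<eta> z - pdy \<xi> z * pdx \<eta> z"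

definition dir_deriv :: "plane_fun \<Rightarrow> real \<times> real \<Rightarrow> real \<Rightarrow> real \<Rightarrow> real" where
  "dir_deriv f z X Y = pdx f z * X + pdy f z * Y"

definition wronskian_poly ::
  "(plane_fun \<Rightarrow> real \<times> real \<Rightarrow> real poly) \<Rightarrow>
   plane_fun \<Rightarrow> plane_fun \<Rightarrow> real \<times> real \<Rightarrow> real poly" where
  "wronskian_poly D \<xi> \<eta> z = D \<eta> z * jet_poly1 \<xi> z - jet_poly1 \<eta> z * D \<xi> z"

lemma degree_wronskian_poly_le:
  "degree (wronskian_poly jet_poly2 \<xi> \<eta> z) \<le> 3" "degree (wronskian_poly jet_poly3 \<xi> \<eta> z) \<le> 4"
  "degree (wronskian_poly jet_poly3_q \<xi> \<eta> z) \<le> 2"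
  unfolding wronskian_poly_def using degree_jet_poly_le[of \<xi> z] degree_jet_poly_le[of \<eta> z]
  by (auto intro!: degree_diff_le order.trans[OF degree_mult_le])

lemma coeff_wronskian_poly_top:
  "coeff (wronskian_poly jet_poly2 \<xi> \<eta> z) 3
     = pdy \<xi> z * coeff (jet_poly2 \<eta> z) 2 - pdy \<eta> z * coeff (jet_poly2 \<xi> z) 2"
  "coeff (wronskian_poly jet_poly3_q \<xi> \<eta> z) 2 = 3 * coeff (wronskian_poly jet_poly2 \<xi> \<eta> z) 3"
  by (simp_all add: wronskian_poly_def jet_poly1_def jet_poly2_def jet_poly3_q_def
      eval_nat_numeral algebra_simps)

(* By numerator_identity, \<Lambda> numer_A and \<Lambda> numer_B are the coefficients of W and of 1 in
   J (Y - X p) \<Lambda>^5 r~, viewed as a polynomial in W. *)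
definition numer_A ::
  "plane_fun \<Rightarrow> plane_fun \<Rightarrow> real \<Rightarrow> real \<Rightarrow> real poly \<Rightarrow>
   real \<times> real \<Rightarrow> real poly" where
  "numer_A \<xi> \<eta> X Y A z =
     [:Y, -X:] * (wronskian_poly jet_poly3_q \<xi> \<eta> z
       + smult 3 (smult (pdy \<xi> z) (jet_poly2 \<eta> z) - smult (pdy \<eta> z) (jet_poly2 \<xi> z)))
     + smult (6 * X) (wronskian_poly jet_poly2 \<xi> \<eta> z) + smult (jacobian \<xi> \<eta> z) A"

definition numer_B ::
  "plane_fun \<Rightarrow> plane_fun \<Rightarrow> real \<Rightarrow> real \<Rightarrow> real poly \<Rightarrow> real poly \<Rightarrow>
   real \<times> real \<Rightarrow> real poly" where
  "numer_B \<xi> \<eta> X Y A B z =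
     smult (jacobian \<xi> \<eta> z) ([:Y, -X:] * wronskian_poly jet_poly3 \<xi> \<eta> z)
     + smult (jacobian \<xi> \<eta> z ^ 2) B
     - wronskian_poly jet_poly2 \<xi> \<eta> z * ([:Y, -X:] * wronskian_poly jet_poly3_q \<xi> \<eta> z
         + smult (3 * X) (wronskian_poly jet_poly2 \<xi> \<eta> z) + smult (jacobian \<xi> \<eta> z) A)"

lemma degree_numer_A_le:
  assumes "degree A \<le> 2"
  shows "degree (numer_A \<xi> \<eta> X Y A z) \<le> 2"
proof -
  define v where "v = wronskian_poly jet_poly3_q \<xi> \<eta> z
    + smult 3 (smult (pdy \<xi> z) (jet_poly2 \<eta> z) - smult (pdy \<eta> z) (jet_poly2 \<xi> z))"
  have "degree v \<le> 2"
    unfolding v_def using degree_wronskian_poly_le degree_jet_poly_le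
    by (intro degree_add_le degree_diff_le order.trans[OF degree_smult_le]) auto
  moreover have "coeff v 2 = 6 * coeff (wronskian_poly jet_poly2 \<xi> \<eta> z) 3"
    unfolding v_def by (simp add: coeff_wronskian_poly_top)
  ultimately have "degree ([:Y, -X:] * v + smult (6 * X) (wronskian_poly jet_poly2 \<xi> \<eta> z)) \<le> 2"
    using degree_wronskian_poly_le(1) by (intro degree_cancel_top) simp_all
  then show ?thesis
    unfolding numer_A_def v_def[symmetric]
    using degree_add_le order.trans[OF degree_smult_le assms] by blast
qed

lemma degree_numer_B_le:
  assumes "degree A \<le> 2" and "degree B \<le> 5"
  shows "degree (numer_B \<xi> \<eta> X Y A B z) \<le> 5"
proof -
  have "degree ([:Y, -X:] * wronskian_poly jet_poly3_q \<xi> \<eta> z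
      + smult (3 * X) (wronskian_poly jet_poly2 \<xi> \<eta> z)) \<le> 2"
    using degree_wronskian_poly_le by (intro degree_cancel_top) (simp_all add: coeff_wronskian_poly_top)
  then have "degree (wronskian_poly jet_poly2 \<xi> \<eta> z * ([:Y, -X:] * wronskian_poly jet_poly3_q \<xi> \<eta> z
      + smult (3 * X) (wronskian_poly jet_poly2 \<xi> \<eta> z) + smult (jacobian \<xi> \<eta> z) A)) \<le> 3 + 2"
    using degree_add_le order.trans[OF degree_smult_le assms(1)]
    by (intro degree_mult_le_add degree_wronskian_poly_le) blast
  moreover have "degree ([:Y, -X:] * wronskian_poly jet_poly3 \<xi> \<eta> z) \<le> 1 + 4"
    using degree_wronskian_poly_le(2) by (intro degree_mult_le_add) simp_all
  ultimately show ?thesis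
    unfolding numer_B_def using assms(2)
    by (intro degree_add_le degree_diff_le order.trans[OF degree_smult_le]) simp_all
qed

lemma numerator_identity:
  fixes \<xi> \<eta> :: plane_fun and z :: "real \<times> real" and X Y p q r :: real
  assumes "(Y - X * p) * r = -3 * X * q^2 + poly A p * q + poly B p"
  defines "\<Lambda> \<equiv> total_deriv1 \<xi> z p" and "\<Theta> \<equiv> total_deriv1 \<eta> z p"
    and "\<Lambda>1 \<equiv> total_deriv2 \<xi> z p q" and "\<Theta>1 \<equiv> total_deriv2 \<eta> z p q"
    and "\<Lambda>2 \<equiv> total_deriv3 \<xi> z p q r" and "\<Theta>2 \<equiv> total_deriv3 \<eta> z p q r"
  shows "jacobian \<xi> \<eta> z * (Y - X * p) * ((\<Theta>2 * \<Lambda> - \<Theta> * \<Lambda>2) * \<Lambda> - 3 * \<Lambda>1 * (\<Theta>1 * \<Lambda> - \<Theta> * \<Lambda>1))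
    = -3 * dir_deriv \<xi> z X Y * (\<Theta>1 * \<Lambda> - \<Theta> * \<Lambda>1)^2
      + \<Lambda> * (\<Theta>1 * \<Lambda> - \<Theta> * \<Lambda>1) * poly (numer_A \<xi> \<eta> X Y A z) p
      + \<Lambda> * poly (numer_B \<xi> \<eta> X Y A B z) p"
  using assms(1)
  unfolding assms(2-) total_deriv1_def total_deriv2_def total_deriv3_def numer_A_def numer_B_def
    wronskian_poly_def jacobian_def dir_deriv_def jet_poly1_def
    poly_add poly_diff poly_mult poly_smult poly_pCons poly_0 poly_power
  by algebra

definition transformed_A ::
  "plane_fun \<Rightarrow> plane_fun \<Rightarrow> real \<Rightarrow> real \<Rightarrow> real poly \<Rightarrow>
   real \<times> real \<Rightarrow> real poly" where
  "transformed_A \<xi> \<eta> X Y A z = smult (inverse (jacobian \<xi> \<eta> z ^ 2))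
     (mobius_poly 2 (pdx \<xi> z) (pdy \<xi> z) (pdx \<eta> z) (pdy \<eta> z) (numer_A \<xi> \<eta> X Y A z))"

definition transformed_B ::
  "plane_fun \<Rightarrow> plane_fun \<Rightarrow> real \<Rightarrow> real \<Rightarrow> real poly \<Rightarrow> real poly \<Rightarrow>
   real \<times> real \<Rightarrow> real poly" where
  "transformed_B \<xi> \<eta> X Y A B z = smult (inverse (jacobian \<xi> \<eta> z ^ 5))
     (mobius_poly 5 (pdx \<xi> z) (pdy \<xi> z) (pdx \<eta> z) (pdy \<eta> z) (numer_B \<xi> \<eta> X Y A B z))"

lemma degree_transformed_le:
  "degree (transformed_A \<xi> \<eta> X Y A z) \<le> 2" "degree (transformed_B \<xi> \<eta> X Y A B z) \<le> 5"
  unfolding transformed_A_def transformed_B_def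
  by (rule order.trans[OF degree_smult_le degree_mobius_poly_le])+

lemma prolong_class_relation:
  fixes \<xi> \<eta> :: plane_fun and z :: "real \<times> real" and X Y p q r :: real
  assumes J: "jacobian \<xi> \<eta> z \<noteq> 0" and \<Lambda>_nz: "total_deriv1 \<xi> z p \<noteq> 0" and D: "Y - X * p \<noteq> 0"
    and A: "degree A \<le> 2" and B: "degree B \<le> 5"
    and rel: "(Y - X * p) * r = -3 * X * q^2 + poly A p * q + poly B p"
  defines "X' \<equiv> dir_deriv \<xi> z X Y" and "Y' \<equiv> dir_deriv \<eta> z X Y"
  shows "Y' - X' * prolong1 \<xi> \<eta> z p \<noteq> 0"
    and "prolong3 \<xi> \<eta> z p q r
      = (-3 * X' * prolong2 \<xi> \<eta> z p q ^ 2
         + poly (transformed_A \<xi> \<eta> X Y A z) (prolong1 \<xi> \<eta> z p) * prolong2 \<xi> \<eta> z p q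
         + poly (transformed_B \<xi> \<eta> X Y A B z) (prolong1 \<xi> \<eta> z p))
        / (Y' - X' * prolong1 \<xi> \<eta> z p)"
proof -
  define \<Lambda> where "\<Lambda> = total_deriv1 \<xi> z p"
  define W where "W = total_deriv2 \<eta> z p q * \<Lambda> - total_deriv1 \<eta> z p * total_deriv2 \<xi> z p q"
  define Z where "Z = (total_deriv3 \<eta> z p q r * \<Lambda> - total_deriv1 \<eta> z p * total_deriv3 \<xi> z p q r) * \<Lambda>
    - 3 * total_deriv2 \<xi> z p q * W"
  have \<Lambda>_eq: "\<Lambda> = pdx \<xi> z + pdy \<xi> z * p"
    and p'_eq: "prolong1 \<xi> \<eta> z p = (pdx \<eta> z + pdy \<eta> z * p) / (pdx \<xi> z + pdy \<xi> z * p)"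
    unfolding \<Lambda>_def prolong1_def total_deriv1_def jet_poly1_def by (simp_all add: algebra_simps)
  have "\<Lambda> \<noteq> 0" using \<Lambda>_nz unfolding \<Lambda>_def .
  have den: "Y' - X' * prolong1 \<xi> \<eta> z p = jacobian \<xi> \<eta> z * (Y - X * p) / \<Lambda>"
    using \<open>\<Lambda> \<noteq> 0\<close> unfolding X'_def Y'_def dir_deriv_def p'_eq \<Lambda>_eq jacobian_def
    by (simp add: field_simps)
  then show "Y' - X' * prolong1 \<xi> \<eta> z p \<noteq> 0"
    using J D \<open>\<Lambda> \<noteq> 0\<close> by simp
  have poly_A: "poly (transformed_A \<xi> \<eta> X Y A z) (prolong1 \<xi> \<eta> z p)
      = poly (numer_A \<xi> \<eta> X Y A z) p / \<Lambda> ^ 2"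
    using J \<open>\<Lambda> \<noteq> 0\<close> poly_mobius_poly[OF degree_numer_A_le[OF A], of "pdx \<xi> z" "pdy \<xi> z" p]
    unfolding transformed_A_def p'_eq \<Lambda>_eq jacobian_def by simp
  have poly_B: "poly (transformed_B \<xi> \<eta> X Y A B z) (prolong1 \<xi> \<eta> z p)
      = poly (numer_B \<xi> \<eta> X Y A B z) p / \<Lambda> ^ 5"
    using J \<open>\<Lambda> \<noteq> 0\<close> poly_mobius_poly[OF degree_numer_B_le[OF A B], of "pdx \<xi> z" "pdy \<xi> z" p]
    unfolding transformed_B_def p'_eq \<Lambda>_eq jacobian_def by simp
  have "-3 * X' * prolong2 \<xi> \<eta> z p q ^ 2
      + poly (numer_A \<xi> \<eta> X Y A z) p / \<Lambda> ^ 2 * prolong2 \<xi> \<eta> z p q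
      + poly (numer_B \<xi> \<eta> X Y A B z) p / \<Lambda> ^ 5
    = (-3 * X' * W ^ 2 + \<Lambda> * W * poly (numer_A \<xi> \<eta> X Y A z) p
       + \<Lambda> * poly (numer_B \<xi> \<eta> X Y A B z) p) / \<Lambda> ^ 6"
    using \<open>\<Lambda> \<noteq> 0\<close> unfolding prolong2_def W_def \<Lambda>_def
    by (simp add: field_simps eval_nat_numeral)
  also have "\<dots> = jacobian \<xi> \<eta> z * (Y - X * p) / \<Lambda> * (Z / \<Lambda> ^ 5)"
    using numerator_identity[OF rel, of \<xi> \<eta> z] \<open>\<Lambda> \<noteq> 0\<close>
    unfolding Z_def W_def \<Lambda>_def X'_def by (simp add: eval_nat_numeral)
  finally show "prolong3 \<xi> \<eta> z p q r
      = (-3 * X' * prolong2 \<xi> \<eta> z p q ^ 2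
         + poly (transformed_A \<xi> \<eta> X Y A z) (prolong1 \<xi> \<eta> z p) * prolong2 \<xi> \<eta> z p q
         + poly (transformed_B \<xi> \<eta> X Y A B z) (prolong1 \<xi> \<eta> z p))
        / (Y' - X' * prolong1 \<xi> \<eta> z p)"
    unfolding poly_A poly_B den using J D \<open>\<Lambda> \<noteq> 0\<close>
    by (simp add: prolong3_def Let_def Z_def W_def \<Lambda>_def)
qed

definition class_A ::
  "(real \<Rightarrow> real \<Rightarrow> real) \<Rightarrow> (real \<Rightarrow> real \<Rightarrow> real) \<Rightarrow> (real \<Rightarrow> real \<Rightarrow> real) \<Rightarrow>
   real \<times> real \<Rightarrow> real poly" where
  "class_A P Q R z = [:case_prod R z, case_prod Q z, case_prod P z:]"

definition class_B ::
  "(real \<Rightarrow> real \<Rightarrow> real) \<Rightarrow> (real \<Rightarrow> real \<Rightarrow> real) \<Rightarrow> (real \<Rightarrow> real \<Rightarrow> real) \<Rightarrow>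
   (real \<Rightarrow> real \<Rightarrow> real) \<Rightarrow> (real \<Rightarrow> real \<Rightarrow> real) \<Rightarrow> (real \<Rightarrow> real \<Rightarrow> real) \<Rightarrow>
   real \<times> real \<Rightarrow> real poly" where
  "class_B S L K M N T z =
     [:case_prod T z, case_prod N z, case_prod M z, case_prod K z, case_prod L z, case_prod S z:]"

lemma degree_class_le:
  "degree (class_A P Q R z) \<le> 2" "degree (class_B S L K M N T z) \<le> 5"
  unfolding class_A_def class_B_def
  by (auto simp: eval_nat_numeral intro!: order.trans[OF degree_pCons_le])

lemma class_rhs_eq_poly:
  "class_rhs X Y P Q R S L K M N T x y p q
    = (-3 * X x y * q^2 + poly (class_A P Q R (x, y)) p * q + poly (class_B S L K M N T (x, y)) p)
      / (Y x y - X x y * p)"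
  by (simp add: class_rhs_def class_A_def class_B_def eval_nat_numeral algebra_simps)

lemma class_rhs_poly_coeffs:
  fixes A B :: "real \<Rightarrow> real \<Rightarrow> real poly"
  assumes "degree (A x y) \<le> 2" and "degree (B x y) \<le> 5"
  shows "class_rhs X Y (\<lambda>x y. coeff (A x y) 2) (\<lambda>x y. coeff (A x y) 1) (\<lambda>x y. coeff (A x y) 0)
      (\<lambda>x y. coeff (B x y) 5) (\<lambda>x y. coeff (B x y) 4) (\<lambda>x y. coeff (B x y) 3)
      (\<lambda>x y. coeff (B x y) 2) (\<lambda>x y. coeff (B x y) 1) (\<lambda>x y. coeff (B x y) 0) x y p q
    = (-3 * X x y * q^2 + poly (A x y) p * q + poly (B x y) p) / (Y x y - X x y * p)"
  by (simp add: class_rhs_def poly_eq_sum_coeffs[OF assms(1)] poly_eq_sum_coeffs[OF assms(2)]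
      eval_nat_numeral atMost_Suc algebra_simps)

lemma transformed_class_equation:
  assumes "C_k 3 \<xi>" and "C_k 3 \<eta>" and J: "jacobian \<xi> \<eta> (t, y t) \<noteq> 0"
    and "open U" and "t \<in> U"
    and "\<forall>s\<in>U. y differentiable (at s) \<and> deriv y differentiable (at s)
              \<and> deriv (deriv y) differentiable (at s)"
    and "deriv (tx \<xi> y) t \<noteq> 0" and D: "Y t (y t) - X t (y t) * deriv y t \<noteq> 0"
    and eq: "deriv (deriv (deriv y)) t
      = class_rhs X Y P Q R S L K M N T t (y t) (deriv y t) (deriv (deriv y) t)"
  defines "X' \<equiv> dir_deriv \<xi> (t, y t) (X t (y t)) (Y t (y t))"
    and "Y' \<equiv> dir_deriv \<eta> (t, y t) (X t (y t)) (Y t (y t))"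
    and "A' \<equiv> transformed_A \<xi> \<eta> (X t (y t)) (Y t (y t)) (class_A P Q R (t, y t)) (t, y t)"
    and "B' \<equiv> transformed_B \<xi> \<eta> (X t (y t)) (Y t (y t))
      (class_A P Q R (t, y t)) (class_B S L K M N T (t, y t)) (t, y t)"
  shows "Y' - X' * tp \<xi> \<eta> y t \<noteq> 0
    \<and> tr \<xi> \<eta> y t = (-3 * X' * tq \<xi> \<eta> y t ^ 2 + poly A' (tp \<xi> \<eta> y t) * tq \<xi> \<eta> y t
        + poly B' (tp \<xi> \<eta> y t)) / (Y' - X' * tp \<xi> \<eta> y t)"
proof -
  note derivs = transformed_derivatives_eq_prolong[OF assms(1,2,4-7)]
  have "(Y t (y t) - X t (y t) * deriv y t) * deriv (deriv (deriv y)) t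
      = -3 * X t (y t) * deriv (deriv y) t ^ 2
        + poly (class_A P Q R (t, y t)) (deriv y t) * deriv (deriv y) t
        + poly (class_B S L K M N T (t, y t)) (deriv y t)"
    using D unfolding eq class_rhs_eq_poly by simp
  from prolong_class_relation[OF J derivs(1) D degree_class_le this]
  show ?thesis
    unfolding derivs X'_def Y'_def A'_def B'_def by blast
qed

theorem theorem1:
  fixes X Y P Q R S L K M N T :: "real \<Rightarrow> real \<Rightarrow> real"
    and \<xi> \<eta> :: "real \<times> real \<Rightarrow> real"
  assumes "C_k 3 \<xi>" and "C_k 3 \<eta>"
    and "inj (\<lambda>z. (\<xi> z, \<eta> z))"
    and "\<forall>z. pdx \<xi> z * pdy \<eta> z - pdy \<xi> z * pdx \<eta> z \<noteq> 0"
  shows "\<exists>X' Y' P' Q' R' S' L' K' M' N' T' :: real \<Rightarrow> real \<Rightarrow> real.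
    \<forall>(y :: real \<Rightarrow> real) (U :: real set) (t :: real).
      open U \<and> t \<in> U
      \<and> (\<forall>s\<in>U. y differentiable (at s) \<and> deriv y differentiable (at s)
                \<and> deriv (deriv y) differentiable (at s))
      \<and> deriv (tx \<xi> y) t \<noteq> 0
      \<and> Y t (y t) - X t (y t) * deriv y t \<noteq> 0
      \<and> deriv (deriv (deriv y)) t
          = class_rhs X Y P Q R S L K M N T t (y t) (deriv y t) (deriv (deriv y) t)
      \<longrightarrow> Y' (tx \<xi> y t) (ty \<eta> y t) - X' (tx \<xi> y t) (ty \<eta> y t) * tp \<xi> \<eta> y t \<noteq> 0
        \<and> tr \<xi> \<eta> y t
          = class_rhs X' Y' P' Q' R' S' L' K' M' N' T'
              (tx \<xi> y t) (ty \<eta> y t) (tp \<xi> \<eta> y t) (tq \<xi> \<eta> y t)"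
proof -
  define w where "w a b = inv (\<lambda>z. (\<xi> z, \<eta> z)) (a, b)" for a b
  define X' where "X' a b = dir_deriv \<xi> (w a b) (case_prod X (w a b)) (case_prod Y (w a b))" for a b
  define Y' where "Y' a b = dir_deriv \<eta> (w a b) (case_prod X (w a b)) (case_prod Y (w a b))" for a b
  define A' where "A' a b = transformed_A \<xi> \<eta> (case_prod X (w a b)) (case_prod Y (w a b))
    (class_A P Q R (w a b)) (w a b)" for a b
  define B' where "B' a b = transformed_B \<xi> \<eta> (case_prod X (w a b)) (case_prod Y (w a b))
    (class_A P Q R (w a b)) (class_B S L K M N T (w a b)) (w a b)" for a b
  show ?thesis
  proof (rule exI[of _ X'], rule exI[of _ Y'],
      rule exI[of _ "\<lambda>a b. coeff (A' a b) 2"], rule exI[of _ "\<lambda>a b. coeff (A' a b) 1"],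
      rule exI[of _ "\<lambda>a b. coeff (A' a b) 0"], rule exI[of _ "\<lambda>a b. coeff (B' a b) 5"],
      rule exI[of _ "\<lambda>a b. coeff (B' a b) 4"], rule exI[of _ "\<lambda>a b. coeff (B' a b) 3"],
      rule exI[of _ "\<lambda>a b. coeff (B' a b) 2"], rule exI[of _ "\<lambda>a b. coeff (B' a b) 1"],
      rule exI[of _ "\<lambda>a b. coeff (B' a b) 0"], intro allI impI, elim conjE, goal_cases)
    case (1 y U t)
    have "jacobian \<xi> \<eta> (t, y t) \<noteq> 0"
      using assms(4) by (simp add: jacobian_def)
    note transformed = transformed_class_equation[OF assms(1,2) this 1]
    have "w (tx \<xi> y t) (ty \<eta> y t) = (t, y t)"
      using inv_f_f[OF assms(3)] by (simp add: w_def tx_def ty_def)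
    with transformed show ?case
      by (subst class_rhs_poly_coeffs[where A = A' and B = B'])
        (simp_all add: X'_def Y'_def A'_def B'_def degree_transformed_le)
  qed
qed

end
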